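(* Let $P,Q$ be finite rooted posets that are Boolean sums of stack-depth at most $1$. If $(P,c,x)$ and $(Q,c',y)$ are $n$-generated models on them (rooted at their roots) which are $2$-bisimilar, then they are isomorphic.
   Context: The depth of a point $x$ in a finite poset is the largest $m$ with a chain $x=x_1<\dots<x_m$. A finite rooted poset is a Boolean sum if (1) whenever $y$ is an immediate successor of $x$ then $d(x)=d(y)+1$, and (2) each point of depth $k+1$ lies below all points of depth $k$. For a Boolean sum, let $c_i$ be the number of points of depth $i$; a $k$-stack is a run of $k$ consecutive depths each containing more than one point; the stack-depth is the largest $k$ for which a $k$-stack exists (0 if none). A model over $n$ is a finite rooted poset with an order-preserving colouring $c$ into subsets of $\{p_1,\dots,p_n\}$; it is $n$-generated if no two distinct points generate bisimilar rooted submodels. $k$-bisimulation: relations $S_k\subseteq\dots\subseteq S_0$ with the roots related by $S_k$, $S_0$ colour-preserving, and for $j<k$ forth and back conditions along $\le$ from $S_{j+1}$ to $S_j$. *)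

theory Defs
  imports Main
begin

text \<open>A finite poset is given by a carrier set and an order relation (only its
restriction to the carrier matters). Rooted: the root is the least element.\<close>

definition finite_rooted_poset :: "'a set \<Rightarrow> ('a \<Rightarrow> 'a \<Rightarrow> bool) \<Rightarrow> 'a \<Rightarrow> bool" where
  "finite_rooted_poset P le r \<longleftrightarrow>
     finite P \<and> r \<in> P \<and>
     (\<forall>x\<in>P. le x x) \<and>
     (\<forall>x\<in>P. \<forall>y\<in>P. le x y \<and> le y x \<longrightarrow> x = y) \<and>
     (\<forall>x\<in>P. \<forall>y\<in>P. \<forall>z\<in>P. le x y \<and> le y z \<longrightarrow> le x z) \<and>
     (\<forall>x\<in>P. le r x)"

definition strict_chain_from :: "'a set \<Rightarrow> ('a \<Rightarrow> 'a \<Rightarrow> bool) \<Rightarrow> 'a \<Rightarrow> 'a list \<Rightarrow> bool" where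
  "strict_chain_from P le x xs \<longleftrightarrow>
     xs \<noteq> [] \<and> hd xs = x \<and> set xs \<subseteq> P \<and> sorted_wrt (\<lambda>a b. le a b \<and> a \<noteq> b) xs"

definition depth :: "'a set \<Rightarrow> ('a \<Rightarrow> 'a \<Rightarrow> bool) \<Rightarrow> 'a \<Rightarrow> nat" where
  "depth P le x = Max {length xs | xs. strict_chain_from P le x xs}"

definition immediate_successor :: "'a set \<Rightarrow> ('a \<Rightarrow> 'a \<Rightarrow> bool) \<Rightarrow> 'a \<Rightarrow> 'a \<Rightarrow> bool" where
  "immediate_successor P le x y \<longleftrightarrow>
     x \<in> P \<and> y \<in> P \<and> le x y \<and> x \<noteq> y \<and>
     \<not> (\<exists>z\<in>P. le x z \<and> le z y \<and> z \<noteq> x \<and> z \<noteq> y)"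

definition boolean_sum :: "'a set \<Rightarrow> ('a \<Rightarrow> 'a \<Rightarrow> bool) \<Rightarrow> 'a \<Rightarrow> bool" where
  "boolean_sum P le r \<longleftrightarrow>
     finite_rooted_poset P le r \<and>
     (\<forall>x\<in>P. \<forall>y\<in>P. immediate_successor P le x y \<longrightarrow> depth P le x = depth P le y + 1) \<and>
     (\<forall>k. \<forall>x\<in>P. \<forall>y\<in>P. depth P le x = k + 1 \<and> depth P le y = k \<longrightarrow> le x y)"

definition level_count :: "'a set \<Rightarrow> ('a \<Rightarrow> 'a \<Rightarrow> bool) \<Rightarrow> nat \<Rightarrow> nat" where
  "level_count P le i = card {x\<in>P. depth P le x = i}"

definition has_stack :: "'a set \<Rightarrow> ('a \<Rightarrow> 'a \<Rightarrow> bool) \<Rightarrow> nat \<Rightarrow> bool" where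
  "has_stack P le k \<longleftrightarrow> (\<exists>i. \<forall>j. i \<le> j \<and> j < i + k \<longrightarrow> level_count P le j > 1)"

definition stack_depth :: "'a set \<Rightarrow> ('a \<Rightarrow> 'a \<Rightarrow> bool) \<Rightarrow> nat" where
  "stack_depth P le = Max {k. has_stack P le k}"

text \<open>Models over n: propositional variables p_1..p_n are numbers 1..n;
colouring is order preserving (monotone upward).\<close>
definition model :: "nat \<Rightarrow> 'a set \<Rightarrow> ('a \<Rightarrow> 'a \<Rightarrow> bool) \<Rightarrow> 'a \<Rightarrow> ('a \<Rightarrow> nat set) \<Rightarrow> bool" where
  "model n P le r c \<longleftrightarrow> finite_rooted_poset P le r \<and>
     (\<forall>x\<in>P. c x \<subseteq> {1..n}) \<and>
     (\<forall>x\<in>P. \<forall>y\<in>P. le x y \<longrightarrow> c x \<subseteq> c y)"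

definition bisimulation ::
  "'a set \<Rightarrow> ('a \<Rightarrow> 'a \<Rightarrow> bool) \<Rightarrow> ('a \<Rightarrow> nat set) \<Rightarrow>
   'b set \<Rightarrow> ('b \<Rightarrow> 'b \<Rightarrow> bool) \<Rightarrow> ('b \<Rightarrow> nat set) \<Rightarrow> ('a \<times> 'b) set \<Rightarrow> bool" where
  "bisimulation P le c Q le' c' B \<longleftrightarrow>
     B \<subseteq> P \<times> Q \<and>
     (\<forall>(a,b)\<in>B. c a = c' b) \<and>
     (\<forall>(a,b)\<in>B. \<forall>a'\<in>P. le a a' \<longrightarrow> (\<exists>b'\<in>Q. le' b b' \<and> (a',b') \<in> B)) \<and>
     (\<forall>(a,b)\<in>B. \<forall>b'\<in>Q. le' b b' \<longrightarrow> (\<exists>a'\<in>P. le a a' \<and> (a',b') \<in> B))"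

text \<open>The rooted submodels generated by x and y (the up-sets) are bisimilar
(with x related to y).\<close>
definition generated_bisimilar :: "'a set \<Rightarrow> ('a \<Rightarrow> 'a \<Rightarrow> bool) \<Rightarrow> ('a \<Rightarrow> nat set) \<Rightarrow> 'a \<Rightarrow> 'a \<Rightarrow> bool" where
  "generated_bisimilar P le c x y \<longleftrightarrow>
     (\<exists>B. bisimulation {z\<in>P. le x z} le c {z\<in>P. le y z} le c B \<and> (x, y) \<in> B)"

definition n_generated :: "nat \<Rightarrow> 'a set \<Rightarrow> ('a \<Rightarrow> 'a \<Rightarrow> bool) \<Rightarrow> 'a \<Rightarrow> ('a \<Rightarrow> nat set) \<Rightarrow> bool" where
  "n_generated n P le r c \<longleftrightarrow> model n P le r c \<and>
     (\<forall>x\<in>P. \<forall>y\<in>P. x \<noteq> y \<longrightarrow> \<not> generated_bisimilar P le c x y)"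

definition k_bisimulation :: "nat \<Rightarrow>
   'a set \<Rightarrow> ('a \<Rightarrow> 'a \<Rightarrow> bool) \<Rightarrow> ('a \<Rightarrow> nat set) \<Rightarrow> 'a \<Rightarrow>
   'b set \<Rightarrow> ('b \<Rightarrow> 'b \<Rightarrow> bool) \<Rightarrow> ('b \<Rightarrow> nat set) \<Rightarrow> 'b \<Rightarrow> (nat \<Rightarrow> ('a \<times> 'b) set) \<Rightarrow> bool" where
  "k_bisimulation k P le c x Q le' c' y S \<longleftrightarrow>
     (\<forall>j\<le>k. S j \<subseteq> P \<times> Q) \<and>
     (\<forall>j<k. S (Suc j) \<subseteq> S j) \<and>
     (x, y) \<in> S k \<and>
     (\<forall>(a,b)\<in>S 0. c a = c' b) \<and>
     (\<forall>j<k. \<forall>(a,b)\<in>S (Suc j). \<forall>a'\<in>P. le a a' \<longrightarrow> (\<exists>b'\<in>Q. le' b b' \<and> (a',b') \<in> S j)) \<and>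
     (\<forall>j<k. \<forall>(a,b)\<in>S (Suc j). \<forall>b'\<in>Q. le' b b' \<longrightarrow> (\<exists>a'\<in>P. le a a' \<and> (a',b') \<in> S j))"

definition k_bisimilar :: "nat \<Rightarrow>
   'a set \<Rightarrow> ('a \<Rightarrow> 'a \<Rightarrow> bool) \<Rightarrow> ('a \<Rightarrow> nat set) \<Rightarrow> 'a \<Rightarrow>
   'b set \<Rightarrow> ('b \<Rightarrow> 'b \<Rightarrow> bool) \<Rightarrow> ('b \<Rightarrow> nat set) \<Rightarrow> 'b \<Rightarrow> bool" where
  "k_bisimilar k P le c x Q le' c' y \<longleftrightarrow> (\<exists>S. k_bisimulation k P le c x Q le' c' y S)"

definition models_isomorphic ::
  "'a set \<Rightarrow> ('a \<Rightarrow> 'a \<Rightarrow> bool) \<Rightarrow> ('a \<Rightarrow> nat set) \<Rightarrow>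
   'b set \<Rightarrow> ('b \<Rightarrow> 'b \<Rightarrow> bool) \<Rightarrow> ('b \<Rightarrow> nat set) \<Rightarrow> bool" where
  "models_isomorphic P le c Q le' c' \<longleftrightarrow>
     (\<exists>f. bij_betw f P Q \<and>
          (\<forall>a\<in>P. \<forall>b\<in>P. le a b \<longleftrightarrow> le' (f a) (f b)) \<and>
          (\<forall>a\<in>P. c' (f a) = c a))"

end

theory Submission
  imports Defs
begin

text \<open>
  In a Boolean sum every point lies below all points of smaller depth, so the order is read off
  from depths: \<open>x \<le> y\<close> iff \<open>x = y\<close> or \<open>d(y) < d(x)\<close>. In an \<open>n\<close>-generated model two
  distinct points of equal colour, each of whose strict up-sets lies in the up-set of the other,
  would generate bisimilar submodels. Hence a colour \<open>c(w)\<close> can reappear at a point of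
  smaller depth only if depth \<open>d(w) - 1\<close> contains two points (otherwise \<open>w\<close> and the unique
  point of that depth form such a pair). As stack-depth at most 1 forbids two adjacent depths
  with two points each, it follows that \<open>a \<le> a'\<close> iff every colour occurring above \<open>a'\<close> also
  occurs above \<open>a\<close>; and the colour of \<open>a\<close> is the intersection of the colours above it.
  A 2-bisimulation relates each point of either model to a point of the other with the same
  colours above it, so matching points by these colour sets is an isomorphism.
\<close>

lemma distinct_if_sorted_wrt_strict:
  "sorted_wrt (\<lambda>a b. le a b \<and> a \<noteq> b) xs \<Longrightarrow> distinct xs"
  by (induction xs) auto

locale rooted_poset =
  fixes P :: "'a set" and le :: "'a \<Rightarrow> 'a \<Rightarrow> bool" and r :: 'a
  assumes finite_rooted_poset: "finite_rooted_poset P le r"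
begin

lemma finite_carrier: "finite P"
  and refl_le: "x \<in> P \<Longrightarrow> le x x"
  and antisym_le: "x \<in> P \<Longrightarrow> y \<in> P \<Longrightarrow> le x y \<Longrightarrow> le y x \<Longrightarrow> x = y"
  and trans_le: "x \<in> P \<Longrightarrow> y \<in> P \<Longrightarrow> z \<in> P \<Longrightarrow> le x y \<Longrightarrow> le y z \<Longrightarrow> le x z"
  using finite_rooted_poset unfolding finite_rooted_poset_def by blast+

abbreviation dp :: "'a \<Rightarrow> nat" where
  "dp \<equiv> depth P le"

lemma length_chain_le_card: "strict_chain_from P le x xs \<Longrightarrow> length xs \<le> card P"
  unfolding strict_chain_from_def
  by (metis distinct_card card_mono finite_carrier distinct_if_sorted_wrt_strict)

lemma finite_chain_lengths: "finite {length xs | xs. strict_chain_from P le x xs}"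
  by (rule finite_subset[of _ "{..card P}"]) (auto dest: length_chain_le_card)

lemma length_chain_le_depth: "strict_chain_from P le x xs \<Longrightarrow> length xs \<le> dp x"
  unfolding depth_def by (rule Max_ge[OF finite_chain_lengths]) auto

lemma depth_attained:
  assumes "x \<in> P"
  obtains xs where "strict_chain_from P le x xs" "length xs = dp x"
proof -
  have "strict_chain_from P le x [x]"
    using assms unfolding strict_chain_from_def by simp
  then have "{length xs | xs. strict_chain_from P le x xs} \<noteq> {}" by blast
  from Max_in[OF finite_chain_lengths this] show ?thesis
    using that unfolding depth_def by auto
qed

lemma depth_ge_1: "x \<in> P \<Longrightarrow> 1 \<le> dp x"
  using length_chain_le_depth[of x "[x]"] unfolding strict_chain_from_def by simp

lemma depth_le_card: "x \<in> P \<Longrightarrow> dp x \<le> card P"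
  by (metis depth_attained length_chain_le_card)

lemma depth_less_if_less:
  assumes "x \<in> P" "z \<in> P" "le x z" "x \<noteq> z"
  shows "dp z < dp x"
proof -
  obtain zs where zs: "strict_chain_from P le z zs" "length zs = dp z"
    using depth_attained[OF assms(2)] .
  have "le z y" if "y \<in> set zs" for y
    using zs(1) that assms(2) refl_le unfolding strict_chain_from_def
    by (cases zs) auto
  moreover have "set zs \<subseteq> P"
    using zs(1) unfolding strict_chain_from_def by simp
  ultimately have "\<forall>y\<in>set zs. le x y \<and> x \<noteq> y"
    using assms antisym_le trans_le by blast
  then have "strict_chain_from P le x (x # zs)"
    using zs(1) assms(1) unfolding strict_chain_from_def by auto
  from length_chain_le_depth[OF this] zs(2) show ?thesis by simp
qed

lemma depth_pred_attained_above:
  assumes "x \<in> P" "1 < dp x"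
  obtains z where "z \<in> P" "le x z" "dp z = dp x - 1"
proof -
  obtain xs where xs: "strict_chain_from P le x xs" "length xs = dp x"
    using depth_attained[OF assms(1)] .
  with assms(2) obtain z zs where xs_eq: "xs = x # z # zs"
    unfolding strict_chain_from_def by (cases xs rule: remdups_adj.cases) auto
  with xs(1) have "z \<in> P" "le x z" "x \<noteq> z" "strict_chain_from P le z (z # zs)"
    unfolding strict_chain_from_def by auto
  moreover from this have "dp x - 1 \<le> dp z"
    using length_chain_le_depth xs(2) xs_eq by fastforce
  moreover have "dp z < dp x"
    using depth_less_if_less assms(1) calculation by blast
  ultimately show ?thesis
    using that by simp
qed

lemma depth_attained_above:
  assumes "x \<in> P" "1 \<le> j" "j \<le> dp x"
  shows "\<exists>z\<in>P. le x z \<and> dp z = j"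
  using assms
proof (induction "dp x - j" arbitrary: x)
  case 0
  then show ?case using refl_le by force
next
  case (Suc k)
  then have "1 < dp x" by linarith
  then obtain z where z: "z \<in> P" "le x z" "dp z = dp x - 1"
    using depth_pred_attained_above Suc.prems(1) by blast
  moreover have "k = dp z - j" "j \<le> dp z" using Suc.hyps(2) z(3) by linarith+
  ultimately obtain w where "w \<in> P" "le z w" "dp w = j"
    using Suc.hyps(1) Suc.prems(2) by blast
  with z Suc.prems(1) show ?case using trans_le by blast
qed

lemma level_count_gt_1_iff:
  "1 < level_count P le k \<longleftrightarrow> (\<exists>u\<in>P. \<exists>v\<in>P. u \<noteq> v \<and> dp u = k \<and> dp v = k)"
  using card_le_Suc0_iff_eq[of "{x\<in>P. dp x = k}"] finite_carrier
  unfolding level_count_def by (auto simp: not_le[symmetric])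

lemma has_stack_le_stack_depth:
  assumes "has_stack P le k"
  shows "k \<le> stack_depth P le"
proof -
  have stack_bound: "k \<le> Suc (card P)" if "has_stack P le k" for k
  proof (cases k)
    case (Suc k')
    from that obtain i where "\<forall>j. i \<le> j \<and> j < i + k \<longrightarrow> 1 < level_count P le j"
      unfolding has_stack_def by blast
    then have "1 < level_count P le (i + k')"
      unfolding Suc by simp
    then obtain u where "u \<in> P" "dp u = i + k'"
      unfolding level_count_gt_1_iff by blast
    with depth_le_card[of u] show ?thesis unfolding Suc by linarith
  qed simp
  have "finite {k. has_stack P le k}"
    by (rule finite_subset[of _ "{..Suc (card P)}"]) (auto dest: stack_bound)
  with assms show ?thesis
    unfolding stack_depth_def by (simp add: Max_ge)
qed

lemma not_adjacent_level_counts_gt_1: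
  assumes "stack_depth P le \<le> 1"
  shows "\<not> (1 < level_count P le j \<and> 1 < level_count P le (Suc j))"
proof
  assume wide: "1 < level_count P le j \<and> 1 < level_count P le (Suc j)"
  have "1 < level_count P le i" if "j \<le> i" "i < j + 2" for i
  proof -
    have "i = j \<or> i = Suc j" using that by linarith
    then show ?thesis using wide by blast
  qed
  then have "has_stack P le 2"
    unfolding has_stack_def by blast
  with has_stack_le_stack_depth[of 2] assms show False by linarith
qed

lemma generated_bisimilar_if_same_strict_upsets:
  assumes "a \<in> P" "b \<in> P" "c a = c b"
    and a_b: "\<And>z. z \<in> P \<Longrightarrow> le a z \<Longrightarrow> z \<noteq> a \<Longrightarrow> le b z"
    and b_a: "\<And>z. z \<in> P \<Longrightarrow> le b z \<Longrightarrow> z \<noteq> b \<Longrightarrow> le a z"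
  shows "generated_bisimilar P le c a b"
proof -
  define B where "B = insert (a, b) {(z, z) | z. z \<in> P \<and> le a z \<and> le b z}"
  have zig: "\<exists>b'. b' \<in> P \<and> le b b' \<and> le q b' \<and> (a', b') \<in> B"
    if "(p, q) \<in> B" "a' \<in> P" "le a a'" "le p a'" for p q a'
  proof (cases "(p, q) = (a, b)")
    case True
    show ?thesis
    proof (cases "a' = a")
      case True
      then show ?thesis using \<open>(p, q) = (a, b)\<close> assms(2) refl_le unfolding B_def by blast
    next
      case False
      then have "le b a'" using a_b that(2,3) by simp
      then show ?thesis using \<open>(p, q) = (a, b)\<close> that(2,3) unfolding B_def by blast
    qed
  next
    case False
    then have "p = q" "p \<in> P" "le b p" using that(1) unfolding B_def by auto
    then have "le b a'" using trans_le[OF assms(2) _ that(2)] that(4) by simp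
    then show ?thesis using \<open>p = q\<close> that(2,3,4) unfolding B_def by blast
  qed
  have zag: "\<exists>a'. a' \<in> P \<and> le a a' \<and> le p a' \<and> (a', b') \<in> B"
    if "(p, q) \<in> B" "b' \<in> P" "le b b'" "le q b'" for p q b'
  proof (cases "(p, q) = (a, b)")
    case True
    show ?thesis
    proof (cases "b' = b")
      case True
      then show ?thesis using \<open>(p, q) = (a, b)\<close> assms(1) refl_le unfolding B_def by blast
    next
      case False
      then have "le a b'" using b_a that(2,3) by simp
      then show ?thesis using \<open>(p, q) = (a, b)\<close> that(2,3) unfolding B_def by blast
    qed
  next
    case False
    then have "p = q" "p \<in> P" "le a p" using that(1) unfolding B_def by auto
    then have "le a b'" using trans_le[OF assms(1) _ that(2)] that(4) by simp
    then show ?thesis using \<open>p = q\<close> that(2,3,4) unfolding B_def by blast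
  qed
  have "bisimulation {z\<in>P. le a z} le c {z\<in>P. le b z} le c B"
    unfolding bisimulation_def
  proof (intro conjI)
    show "B \<subseteq> {z\<in>P. le a z} \<times> {z\<in>P. le b z}" "\<forall>(p, q)\<in>B. c p = c q"
      using assms(1-3) refl_le unfolding B_def by auto
  qed (simp_all add: Ball_def Bex_def zig zag)
  then show ?thesis
    unfolding generated_bisimilar_def B_def by blast
qed

end

locale boolean_sum_poset =
  fixes P :: "'a set" and le :: "'a \<Rightarrow> 'a \<Rightarrow> bool" and r :: 'a
  assumes boolean_sum: "boolean_sum P le r"

sublocale boolean_sum_poset \<subseteq> rooted_poset
  using boolean_sum unfolding boolean_sum_def by unfold_locales blast

context boolean_sum_poset
begin

lemma le_if_depth_less:
  assumes "x \<in> P" "y \<in> P" "dp y < dp x"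
  shows "le x y"
proof -
  obtain z where z: "z \<in> P" "le x z" "dp z = Suc (dp y)"
    using depth_attained_above[OF assms(1), of "Suc (dp y)"] assms(3) by auto
  with assms(2) have "le z y"
    using boolean_sum unfolding boolean_sum_def by simp
  with z assms show ?thesis
    using trans_le by blast
qed

lemma le_iff_depth: "x \<in> P \<Longrightarrow> y \<in> P \<Longrightarrow> le x y \<longleftrightarrow> x = y \<or> dp y < dp x"
  using refl_le le_if_depth_less depth_less_if_less by blast

end

locale boolean_model = boolean_sum_poset +
  fixes c :: "'a \<Rightarrow> nat set" and n :: nat
  assumes n_generated: "n_generated n P le r c"
begin

lemma model: "model n P le r c"
  using n_generated unfolding n_generated_def by blast

lemma colour_mono: "x \<in> P \<Longrightarrow> y \<in> P \<Longrightarrow> le x y \<Longrightarrow> c x \<subseteq> c y"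
  using model unfolding model_def by blast

lemma eq_if_same_strict_upsets:
  assumes "a \<in> P" "b \<in> P" "c a = c b"
    and "\<And>z. z \<in> P \<Longrightarrow> le a z \<Longrightarrow> z \<noteq> a \<Longrightarrow> le b z"
    and "\<And>z. z \<in> P \<Longrightarrow> le b z \<Longrightarrow> z \<noteq> b \<Longrightarrow> le a z"
  shows "a = b"
  using generated_bisimilar_if_same_strict_upsets[OF assms] n_generated assms(1,2)
  unfolding n_generated_def by blast

lemma eq_if_same_depth_same_colour:
  assumes "a \<in> P" "b \<in> P" "dp a = dp b" "c a = c b"
  shows "a = b"
  using assms by (intro eq_if_same_strict_upsets) (auto simp: le_iff_depth)

lemma level_count_pred_gt_1_if_colour_repeats:
  assumes "w \<in> P" "u \<in> P" "dp u < dp w" "c w = c u"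
  shows "1 < level_count P le (dp w - 1)"
proof (rule ccontr)
  assume "\<not> 1 < level_count P le (dp w - 1)"
  then have narrow: "z = z'" if "z \<in> P" "z' \<in> P" "dp z = dp w - 1" "dp z' = dp w - 1" for z z'
    using that unfolding level_count_gt_1_iff by blast
  have "1 \<le> dp w - 1" "dp w - 1 \<le> dp w"
    using depth_ge_1[OF assms(2)] assms(3) by linarith+
  then obtain v where v: "v \<in> P" "le w v" "dp v = dp w - 1"
    using depth_attained_above[OF assms(1)] by blast
  have above_v: "le v z" if "z \<in> P" "dp z < dp w" for z
    using that v narrow[of z v] le_iff_depth[OF v(1) that(1)] by fastforce
  have "c w \<subseteq> c v" "c v \<subseteq> c u"
    using colour_mono v above_v assms by blast+
  then have "w = v"
    using assms(1,4) v above_v trans_le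
    by (intro eq_if_same_strict_upsets) (auto simp: le_iff_depth)
  with v(3) assms(3) show False by simp
qed

lemma level_count_pred_gt_1_if_colour_above:
  assumes "v \<in> P" "a \<in> P" "u \<in> P" "le a u" "c v = c u" "dp a \<le> dp v" "v \<noteq> a"
  shows "1 < level_count P le (dp v - 1)"
proof (cases "dp u < dp v")
  case True
  with assms(1,3,5) show ?thesis by (intro level_count_pred_gt_1_if_colour_repeats)
next
  case False
  with assms(2-4,6) have "u = a" "dp v = dp a"
    using le_iff_depth by fastforce+
  with assms eq_if_same_depth_same_colour show ?thesis by blast
qed

end

definition upset_colours :: "'a set \<Rightarrow> ('a \<Rightarrow> 'a \<Rightarrow> bool) \<Rightarrow> ('a \<Rightarrow> nat set) \<Rightarrow> 'a \<Rightarrow> nat set set" where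
  "upset_colours P le c a = c ` {z\<in>P. le a z}"

lemma Inter_upset_colours:
  assumes "model n P le r c" "a \<in> P"
  shows "\<Inter> (upset_colours P le c a) = c a"
proof -
  have "le a a" and "\<And>z. z \<in> P \<Longrightarrow> le a z \<Longrightarrow> c a \<subseteq> c z"
    using assms unfolding model_def finite_rooted_poset_def by blast+
  with assms(2) show ?thesis
    unfolding upset_colours_def by blast
qed

locale boolean_model_stack_depth_1 = boolean_model +
  assumes stack_depth_le_1: "stack_depth P le \<le> 1"
begin

lemma le_if_upset_colours_subset:
  assumes a: "a \<in> P" and a': "a' \<in> P"
    and subset: "upset_colours P le c a' \<subseteq> upset_colours P le c a"
  shows "le a a'"
proof (rule ccontr)
  have colour_above_a: "\<exists>u\<in>P. le a u \<and> c v = c u" if "v \<in> P" "le a' v" for v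
    using that subset unfolding upset_colours_def by blast
  assume "\<not> le a a'"
  then have "dp a \<le> dp a'" "a' \<noteq> a"
    using le_iff_depth[OF a a'] by auto
  moreover obtain u where "u \<in> P" "le a u" "c a' = c u"
    using colour_above_a[OF a' refl_le[OF a']] by blast
  ultimately have wide: "1 < level_count P le (dp a' - 1)"
    using level_count_pred_gt_1_if_colour_above a a' by blast
  have dp_a': "dp a' = Suc (dp a' - 1)"
    using depth_ge_1[OF a'] by simp
  show False
  proof (cases "dp a = dp a'")
    case True
    with \<open>a' \<noteq> a\<close> a a' have "1 < level_count P le (dp a')"
      unfolding level_count_gt_1_iff by blast
    with wide dp_a' show False
      using not_adjacent_level_counts_gt_1[OF stack_depth_le_1] by metis
  next
    case False
    with wide obtain w where w: "w \<in> P" "dp w = dp a' - 1" "w \<noteq> a"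
      unfolding level_count_gt_1_iff by metis
    then have "le a' w"
      using le_if_depth_less[OF a'] dp_a' by simp
    then obtain u' where "u' \<in> P" "le a u'" "c w = c u'"
      using colour_above_a w(1) by blast
    moreover have "dp a \<le> dp w"
      using False \<open>dp a \<le> dp a'\<close> w(2) by linarith
    ultimately have "1 < level_count P le (dp w - 1)"
      using level_count_pred_gt_1_if_colour_above w(1,3) a by blast
    moreover have "dp w = Suc (dp w - 1)"
      using depth_ge_1[OF w(1)] by simp
    ultimately show False
      using wide w(2) not_adjacent_level_counts_gt_1[OF stack_depth_le_1] by metis
  qed
qed

lemma le_iff_upset_colours_subset:
  "a \<in> P \<Longrightarrow> a' \<in> P \<Longrightarrow> le a a' \<longleftrightarrow> upset_colours P le c a' \<subseteq> upset_colours P le c a"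
  using le_if_upset_colours_subset trans_le unfolding upset_colours_def by blast

end

lemma upset_colours_eq_if_k_bisimulation:
  assumes S: "k_bisimulation k P le c x Q le' c' y S" and "0 < k" and ab: "(a, b) \<in> S 1"
  shows "upset_colours P le c a = upset_colours Q le' c' b"
proof -
  from S \<open>0 < k\<close> have
    zig: "\<forall>(a, b)\<in>S 1. \<forall>a'\<in>P. le a a' \<longrightarrow> (\<exists>b'\<in>Q. le' b b' \<and> (a', b') \<in> S 0)" and
    zag: "\<forall>(a, b)\<in>S 1. \<forall>b'\<in>Q. le' b b' \<longrightarrow> (\<exists>a'\<in>P. le a a' \<and> (a', b') \<in> S 0)" and
    colours: "\<forall>(a', b')\<in>S 0. c a' = c' b'"
    unfolding k_bisimulation_def One_nat_def by blast+
  have "c ` {z\<in>P. le a z} \<subseteq> c' ` {z\<in>Q. le' b z}"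
  proof (rule image_subsetI)
    fix a' assume "a' \<in> {z\<in>P. le a z}"
    with zig ab obtain b' where "b' \<in> Q" "le' b b'" "(a', b') \<in> S 0" by blast
    with colours show "c a' \<in> c' ` {z\<in>Q. le' b z}" by force
  qed
  moreover have "c' ` {z\<in>Q. le' b z} \<subseteq> c ` {z\<in>P. le a z}"
  proof (rule image_subsetI)
    fix b' assume "b' \<in> {z\<in>Q. le' b z}"
    with zag ab obtain a' where "a' \<in> P" "le a a'" "(a', b') \<in> S 0" by blast
    with colours show "c' b' \<in> c ` {z\<in>P. le a z}" by force
  qed
  ultimately show ?thesis
    unfolding upset_colours_def by blast
qed

lemma upset_colours_image_eq_if_2_bisimilar:
  assumes "k_bisimilar 2 P le c x Q le' c' y"
    and P: "finite_rooted_poset P le x" and Q: "finite_rooted_poset Q le' y"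
  shows "upset_colours P le c ` P = upset_colours Q le' c' ` Q"
proof -
  obtain S where S: "k_bisimulation 2 P le c x Q le' c' y S"
    using assms(1) unfolding k_bisimilar_def by blast
  have "(x, y) \<in> S (Suc 1)"
    using S unfolding k_bisimulation_def by (simp add: numeral_2_eq_2)
  moreover have
    "\<forall>(a, b)\<in>S (Suc 1). \<forall>a'\<in>P. le a a' \<longrightarrow> (\<exists>b'\<in>Q. le' b b' \<and> (a', b') \<in> S 1)"
    "\<forall>(a, b)\<in>S (Suc 1). \<forall>b'\<in>Q. le' b b' \<longrightarrow> (\<exists>a'\<in>P. le a a' \<and> (a', b') \<in> S 1)"
    using S unfolding k_bisimulation_def by (simp_all add: numeral_2_eq_2)
  ultimately have
    zig: "\<And>a. a \<in> P \<Longrightarrow> le x a \<Longrightarrow> \<exists>b\<in>Q. (a, b) \<in> S 1" and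
    zag: "\<And>b. b \<in> Q \<Longrightarrow> le' y b \<Longrightarrow> \<exists>a\<in>P. (a, b) \<in> S 1"
    by fast+
  have S1: "upset_colours P le c a = upset_colours Q le' c' b" if "(a, b) \<in> S 1" for a b
    using upset_colours_eq_if_k_bisimulation[OF S _ that] by simp
  have "upset_colours P le c ` P \<subseteq> upset_colours Q le' c' ` Q"
  proof (rule image_subsetI)
    fix a assume "a \<in> P"
    moreover from this P have "le x a"
      unfolding finite_rooted_poset_def by blast
    ultimately obtain b where "b \<in> Q" "(a, b) \<in> S 1"
      using zig by blast
    with S1 show "upset_colours P le c a \<in> upset_colours Q le' c' ` Q"
      by (metis image_eqI)
  qed
  moreover have "upset_colours Q le' c' ` Q \<subseteq> upset_colours P le c ` P"
  proof (rule image_subsetI)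
    fix b assume "b \<in> Q"
    moreover from this Q have "le' y b"
      unfolding finite_rooted_poset_def by blast
    ultimately obtain a where "a \<in> P" "(a, b) \<in> S 1"
      using zag by blast
    with S1 show "upset_colours Q le' c' b \<in> upset_colours P le c ` P"
      by (metis image_eqI)
  qed
  ultimately show ?thesis by blast
qed

lemma models_isomorphic_if_upset_colours_image_eq:
  assumes models: "model n P le r c" "model n' Q le' r' c'"
    and le_P: "\<And>a a'. a \<in> P \<Longrightarrow> a' \<in> P \<Longrightarrow>
                  le a a' \<longleftrightarrow> upset_colours P le c a' \<subseteq> upset_colours P le c a"
    and le_Q: "\<And>b b'. b \<in> Q \<Longrightarrow> b' \<in> Q \<Longrightarrow>
                  le' b b' \<longleftrightarrow> upset_colours Q le' c' b' \<subseteq> upset_colours Q le' c' b"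
    and same_image: "upset_colours P le c ` P = upset_colours Q le' c' ` Q"
  shows "models_isomorphic P le c Q le' c'"
proof -
  let ?U = "upset_colours P le c" and ?U' = "upset_colours Q le' c'"
  have inj: "inj_on ?U P"
  proof (rule inj_onI)
    fix a a' assume "a \<in> P" "a' \<in> P" "?U a = ?U a'"
    with le_P have "le a a'" "le a' a" by simp_all
    with \<open>a \<in> P\<close> \<open>a' \<in> P\<close> models(1) show "a = a'"
      unfolding model_def finite_rooted_poset_def by blast
  qed
  have inj': "inj_on ?U' Q"
  proof (rule inj_onI)
    fix b b' assume "b \<in> Q" "b' \<in> Q" "?U' b = ?U' b'"
    with le_Q have "le' b b'" "le' b' b" by simp_all
    with \<open>b \<in> Q\<close> \<open>b' \<in> Q\<close> models(2) show "b = b'"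
      unfolding model_def finite_rooted_poset_def by blast
  qed
  define f where "f = the_inv_into Q ?U' \<circ> ?U"
  have "bij_betw ?U P (?U' ` Q)"
    using inj_on_imp_bij_betw[OF inj] same_image by simp
  moreover have "bij_betw (the_inv_into Q ?U') (?U' ` Q) Q"
    using bij_betw_the_inv_into[OF inj_on_imp_bij_betw[OF inj']] .
  ultimately have bij: "bij_betw f P Q"
    unfolding f_def by (rule bij_betw_trans)
  have U'_f: "?U' (f a) = ?U a" if "a \<in> P" for a
  proof -
    have "?U a \<in> ?U' ` Q"
      using that same_image by blast
    then show ?thesis
      unfolding f_def by (simp add: f_the_inv_into_f[OF inj'])
  qed
  have f_in: "f a \<in> Q" if "a \<in> P" for a
    using bij_betw_apply[OF bij that] .
  show ?thesis
    unfolding models_isomorphic_def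
  proof (intro exI conjI ballI)
    show "bij_betw f P Q" by (fact bij)
  next
    fix a b assume "a \<in> P" "b \<in> P"
    then show "le a b \<longleftrightarrow> le' (f a) (f b)"
      using le_P le_Q U'_f f_in by simp
  next
    fix a assume "a \<in> P"
    then have "c' (f a) = \<Inter> (?U' (f a))"
      using Inter_upset_colours[OF models(2) f_in] by simp
    also have "\<dots> = c a"
      using U'_f Inter_upset_colours[OF models(1)] \<open>a \<in> P\<close> by simp
    finally show "c' (f a) = c a" .
  qed
qed

theorem mainTheorem6:
  fixes P :: "'a set" and le :: "'a \<Rightarrow> 'a \<Rightarrow> bool" and x :: 'a and c :: "'a \<Rightarrow> nat set"
    and Q :: "'b set" and le' :: "'b \<Rightarrow> 'b \<Rightarrow> bool" and y :: 'b and c' :: "'b \<Rightarrow> nat set"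
    and n :: nat
  assumes "boolean_sum P le x" and "stack_depth P le \<le> 1"
    and "boolean_sum Q le' y" and "stack_depth Q le' \<le> 1"
    and "n_generated n P le x c" and "n_generated n Q le' y c'"
    and "k_bisimilar 2 P le c x Q le' c' y"
  shows "models_isomorphic P le c Q le' c'"
proof -
  interpret P: boolean_model_stack_depth_1 P le x c n
    by unfold_locales (fact assms)+
  interpret Q: boolean_model_stack_depth_1 Q le' y c' n
    by unfold_locales (fact assms)+
  have "upset_colours P le c ` P = upset_colours Q le' c' ` Q"
    using assms(7) P.finite_rooted_poset Q.finite_rooted_poset
    by (rule upset_colours_image_eq_if_2_bisimilar)
  with P.model Q.model P.le_iff_upset_colours_subset Q.le_iff_upset_colours_subset
  show ?thesis
    by (rule models_isomorphic_if_upset_colours_image_eq)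
qed

end
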